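(* Let $m \equiv 1 \pmod 4$ with $m > 1$, $n = 3^m - 1$, $v = (3^{(m+1)/2}-1)/2$ and $\delta = (3^{(m-1)/2}+5)/2$. Then $\gcd(v,n) = 1$, and, setting $T_{(2,3,m)}(v) = \{ vi \bmod n : i \in T_{(2,3,m)}\}$, we have $\{n-(\delta-1), \ldots, n-2, n-1\} \subseteq T_{(2,3,m)}(v)$.
   Context: For an integer $0 \le j \le n-1$ with $3$-adic expansion $j = \sum_{t=0}^{m-1} j_t 3^t$, $j_t \in \{0,1,2\}$, let $w_3(j) = \sum_{t=0}^{m-1} j_t$. For distinct $i_1,i_2 \in \{0,1,2,3\}$, $T_{(i_1,i_2,m)} = \{1 \le j \le n-1 : w_3(j) \equiv i_1 \text{ or } i_2 \pmod 4\}$. For an integer $b$, $b \bmod n$ is the unique $b_0 \in \{0,\ldots,n-1\}$ with $b \equiv b_0 \pmod n$. *)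

theory Defs
  imports Main
begin

fun w3 :: "nat \<Rightarrow> nat" where
  "w3 j = (if j = 0 then 0 else j mod 3 + w3 (j div 3))"

declare w3.simps[simp del]

definition T :: "nat \<Rightarrow> nat \<Rightarrow> nat \<Rightarrow> nat set" where
  "T i1 i2 m = {j. 1 \<le> j \<and> j \<le> 3 ^ m - 2 \<and>
                   (w3 j mod 4 = i1 \<or> w3 j mod 4 = i2)}"

end

theory Submission
  imports Defs
begin

text \<open>Write \<open>m = 4k + 1\<close> and \<open>3\<^sup>2\<^sup>k = K = 8r + 1\<close>, so that \<open>n = 3K\<^sup>2 - 1\<close>, \<open>v = 12r + 1\<close>,
  \<open>2v = 3K - 1\<close> and \<open>2v (3K + 1) = 3n + 2\<close>; as \<open>v\<close> is odd, \<open>gcd v n = 1\<close>.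
  Every \<open>n - t\<close> with \<open>1 \<le> t \<le> 4r + 2\<close> is hit by \<open>i = n - y\<close>, where \<open>v y \<equiv> t (mod n)\<close> and
  \<open>y\<close> is written down in base 3:
  \<open>y = t (3K + 1)\<close> for even \<open>t\<close>, \<open>y = 2K + 1\<close> for \<open>t = 4r + 1\<close>, and
  \<open>y = u (3K + 1) + K\<close> with \<open>u = t + 4r\<close> for the remaining odd \<open>t\<close>.
  These are concatenations of base-3 blocks, so \<open>w\<^sub>3(y)\<close> is \<open>2 w\<^sub>3(t)\<close>, \<open>3\<close> or \<open>2 w\<^sub>3(u) + 1\<close>;
  since \<open>w\<^sub>3(x) \<equiv> x (mod 2)\<close> this is \<open>0\<close> or \<open>3\<close> modulo 4. Finally
  \<open>w\<^sub>3(n - y) = 2m - w\<^sub>3(y)\<close> (base-3 complement), which is \<open>2\<close> or \<open>3\<close> modulo 4 as \<open>m\<close> is odd.\<close>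

lemma w3_0 [simp]: "w3 0 = 0"
  by (subst w3.simps) simp

lemma w3_mult_3_add: "r < 3 \<Longrightarrow> w3 (3 * a + r) = w3 a + r"
  by (subst w3.simps) auto

lemma w3_less_3: "x < 3 \<Longrightarrow> w3 x = x"
  using w3_mult_3_add[of x 0] by simp

lemma w3_mult_power_add: "b < 3 ^ p \<Longrightarrow> w3 (a * 3 ^ p + b) = w3 a + w3 b"
proof (induction p arbitrary: b)
  case 0
  then show ?case by simp
next
  case (Suc p)
  have "a * 3 ^ Suc p + b = 3 * (a * 3 ^ p + b div 3) + b mod 3"
    by simp
  then have "w3 (a * 3 ^ Suc p + b) = w3 (a * 3 ^ p + b div 3) + b mod 3"
    by (simp only: w3_mult_3_add)
  also have "\<dots> = w3 a + (w3 (b div 3) + b mod 3)"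
    using Suc by simp
  also have "w3 (b div 3) + b mod 3 = w3 b"
    using w3_mult_3_add[of "b mod 3" "b div 3"] by simp
  finally show ?case .
qed

lemma w3_compl_add: "x \<le> 3 ^ m - 1 \<Longrightarrow> w3 (3 ^ m - 1 - x) + w3 x = 2 * m"
proof (induction m arbitrary: x)
  case 0
  then show ?case by simp
next
  case (Suc m)
  have x: "x = 3 * (x div 3) + x mod 3" and "x mod 3 < 3"
    by simp_all
  have "(3::nat) ^ m \<ge> 1"
    by simp
  then have q: "x div 3 \<le> 3 ^ m - 1"
    using Suc.prems x by simp
  have "3 ^ Suc m - 1 - x = 3 * (3 ^ m - 1 - x div 3) + (2 - x mod 3)"
    using q x \<open>x mod 3 < 3\<close> \<open>3 ^ m \<ge> 1\<close> unfolding power_Suc by linarith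
  then have "w3 (3 ^ Suc m - 1 - x) = w3 (3 ^ m - 1 - x div 3) + (2 - x mod 3)"
    by (simp only: w3_mult_3_add)
  moreover have "w3 x = w3 (x div 3) + x mod 3"
    by (subst x, rule w3_mult_3_add) simp
  ultimately have "w3 (3 ^ Suc m - 1 - x) + w3 x = 2 * m + 2"
    using Suc.IH[OF q] \<open>x mod 3 < 3\<close> by linarith
  then show ?case
    by simp
qed

lemma w3_mod_2: "w3 x mod 2 = x mod 2"
proof (induction x rule: w3.induct)
  case (1 j)
  show ?case
  proof (cases "j = 0")
    case False
    have "w3 j = j mod 3 + w3 (j div 3)"
      using False by (subst w3.simps) simp
    moreover have "j = (j mod 3 + j div 3) + 2 * (j div 3)"
      using div_mult_mod_eq[of j 3] by linarith
    then have "j mod 2 = (j mod 3 + j div 3) mod 2"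
      by (metis mod_mult_self2)
    ultimately show ?thesis
      using 1 False by (metis mod_add_right_eq)
  qed simp
qed

lemma mult_compl_mod_eq:
  fixes v y t n :: nat
  assumes vy: "(v * y) mod n = t" and "0 < t" and "y \<le> n"
  shows "(v * (n - y)) mod n = n - t"
proof -
  have "0 < n"
    using assms by (cases "n = 0") auto
  then have "t < n"
    using vy by auto
  define a where "a = (v * (n - y)) mod n"
  have "a < n"
    using \<open>0 < n\<close> unfolding a_def by simp
  have "(a + t) mod n = (v * (n - y) + v * y) mod n"
    unfolding a_def vy[symmetric] by (simp add: mod_add_eq)
  also have "v * (n - y) + v * y = n * v"
    using \<open>y \<le> n\<close> by (metis add_mult_distrib2 le_add_diff_inverse2 mult.commute)
  finally obtain c where c: "a + t = n * c"
    by auto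
  with \<open>a < n\<close> \<open>t < n\<close> have "c < 2"
    by (metis add_strict_mono mult_2_right mult_less_cancel1)
  moreover have "c \<noteq> 0"
    using c \<open>0 < t\<close> by (intro notI) simp
  ultimately have "c = 1"
    by linarith
  with c show ?thesis
    unfolding a_def by simp
qed

lemma compl_mem_image_T:
  fixes m n v y t :: nat
  assumes "odd m" and n: "n = 3 ^ m - 1" and "1 \<le> y" "y < n" "0 < t"
    and vy: "(v * y) mod n = t" and wy: "w3 y mod 4 = 0 \<or> w3 y mod 4 = 3"
  shows "n - t \<in> (\<lambda>i. (v * i) mod n) ` T 2 3 m"
proof (rule image_eqI[where x = "n - y"])
  have "w3 (n - y) + w3 y = 2 * m"
    using w3_compl_add[of y m] n \<open>y < n\<close> by simp
  then have "w3 (n - y) mod 4 = 2 \<or> w3 (n - y) mod 4 = 3"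
    using \<open>odd m\<close> wy by presburger
  then show "n - y \<in> T 2 3 m"
    using \<open>1 \<le> y\<close> \<open>y < n\<close> n unfolding T_def by auto
  show "n - t = (v * (n - y)) mod n"
    using mult_compl_mod_eq[OF vy \<open>0 < t\<close>] \<open>y < n\<close> by simp
qed

lemma three_pow_mult_2_mod_8: "(3::nat) ^ (2 * k) mod 8 = 1"
  by (simp add: power_mult power_mod[of 9, symmetric])

context
  fixes k r m n v :: nat
  assumes m_eq: "m = 4 * k + 1"
    and three_pow_2k: "3 ^ (2 * k) = 8 * r + 1"
    and r_pos: "1 \<le> r"
    and n_eq: "n = 3 ^ m - 1"
    and v_eq: "v = 12 * r + 1"
begin

lemma three_pow_2k_Suc: "3 ^ (2 * k + 1) = 24 * r + 3"
  using three_pow_2k by simp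

lemma n_eq_poly: "n = 192 * (r * r) + 48 * r + 2"
proof -
  have "(3::nat) ^ m = 3 ^ (2 * k + 1) * 3 ^ (2 * k)"
    unfolding m_eq by (simp flip: power_add)
  then show ?thesis
    unfolding n_eq three_pow_2k three_pow_2k_Suc by (simp add: algebra_simps)
qed

lemma odd_m: "odd m"
  using m_eq by simp

lemma gcd_v_n: "gcd v n = 1"
proof -
  have "v * (48 * r + 8) = 3 * n + 2"
    unfolding v_eq n_eq_poly by (simp add: algebra_simps)
  then have "gcd v n dvd 3 * n + 2"
    by (metis dvd_mult2 gcd_dvd1)
  moreover have "gcd v n dvd 3 * n"
    by simp
  ultimately have "gcd v n dvd 2"
    using dvd_add_right_iff by blast
  then have "gcd v n dvd gcd v 2"
    by simp
  also have "gcd v 2 = 1"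
    using v_eq by (simp flip: coprime_iff_gcd_eq_1)
  finally show ?thesis
    by simp
qed

lemma mem_image_T_even:
  assumes "even t" and "1 \<le> t" and "t \<le> 4 * r + 2"
  shows "n - t \<in> (\<lambda>i. (v * i) mod n) ` T 2 3 m"
proof -
  obtain s where s: "t = 2 * s"
    using \<open>even t\<close> by blast
  define y where "y = t * 3 ^ (2 * k + 1) + t"
  have "t < 3 ^ (2 * k + 1)"
    using assms three_pow_2k_Suc by simp
  then have "w3 y = 2 * w3 t"
    unfolding y_def using w3_mult_power_add[of t "2 * k + 1" t] by simp
  moreover have "even (w3 t)"
    using w3_mod_2[of t] \<open>even t\<close> by (simp add: even_iff_mod_2_eq_zero)
  ultimately have wy: "w3 y mod 4 = 0"
    by auto
  have y: "y = t * (24 * r + 4)"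
    unfolding y_def three_pow_2k_Suc by (simp add: algebra_simps)
  have "y \<le> (4 * r + 2) * (24 * r + 4)"
    unfolding y using assms(3) by (rule mult_right_mono) simp
  also have "\<dots> = 96 * (r * r) + 64 * r + 8"
    by (simp add: algebra_simps)
  finally have "y < n"
    unfolding n_eq_poly using r_pos mult_le_mono1[OF r_pos, of r] by linarith
  have "t < n"
    using \<open>t \<le> 4 * r + 2\<close> n_eq_poly r_pos by linarith
  have "v * y = t + 3 * s * n"
    unfolding y v_eq s n_eq_poly by (simp add: algebra_simps)
  then have "(v * y) mod n = t"
    using \<open>t < n\<close> by simp
  then show ?thesis
    using compl_mem_image_T[OF odd_m n_eq _ \<open>y < n\<close>] \<open>1 \<le> t\<close> wy y by simp
qed

lemma mem_image_T_middle: "n - (4 * r + 1) \<in> (\<lambda>i. (v * i) mod n) ` T 2 3 m"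
proof -
  define y :: nat where "y = 2 * 3 ^ (2 * k) + 1"
  have "(1::nat) < 3 ^ (2 * k)"
    using three_pow_2k r_pos by simp
  then have wy: "w3 y = 3"
    unfolding y_def using w3_mult_power_add[of 1 "2 * k" 2] by (simp add: w3_less_3)
  have y: "y = 16 * r + 3"
    unfolding y_def three_pow_2k by simp
  have "y < n" and "4 * r + 1 < n"
    unfolding y n_eq_poly using r_pos by linarith+
  have "v * y = 4 * r + 1 + n"
    unfolding y v_eq n_eq_poly by (simp add: algebra_simps)
  then have "(v * y) mod n = 4 * r + 1"
    using \<open>4 * r + 1 < n\<close> by (metis mod_add_self2 mod_less)
  then show ?thesis
    using compl_mem_image_T[OF odd_m n_eq _ \<open>y < n\<close>] wy y by simp
qed

lemma mem_image_T_odd: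
  assumes "odd t" and "t < 4 * r + 1"
  shows "n - t \<in> (\<lambda>i. (v * i) mod n) ` T 2 3 m"
proof -
  obtain s where s: "t = 2 * s + 1"
    using \<open>odd t\<close> oddE by blast
  define u where "u = t + 4 * r"
  define y where "y = u * 3 ^ (2 * k + 1) + (3 ^ (2 * k) + u)"
  have "u < 3 ^ (2 * k)"
    using assms unfolding u_def three_pow_2k by simp
  moreover from this have "3 ^ (2 * k) + u < 3 ^ (2 * k + 1)"
    by simp
  ultimately have "w3 y = 2 * w3 u + 1"
    unfolding y_def
    using w3_mult_power_add[of "3 ^ (2 * k) + u" "2 * k + 1" u] w3_mult_power_add[of u "2 * k" 1]
    by (simp add: w3_less_3)
  moreover have "odd u"
    unfolding u_def s by simp
  then have "odd (w3 u)"
    using w3_mod_2[of u] by (simp add: odd_iff_mod_2_eq_one)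
  ultimately have wy: "w3 y mod 4 = 3"
    by (auto elim!: oddE)
  have y: "y = u * (24 * r + 4) + 8 * r + 1"
    unfolding y_def three_pow_2k_Suc three_pow_2k by (simp add: algebra_simps)
  have "u \<le> 8 * r"
    using assms unfolding u_def by simp
  then have "y \<le> 8 * r * (24 * r + 4) + 8 * r + 1"
    unfolding y by simp
  also have "\<dots> = 192 * (r * r) + 40 * r + 1"
    by (simp add: algebra_simps)
  finally have "y < n"
    unfolding n_eq_poly by linarith
  have "t < n"
    using \<open>t < 4 * r + 1\<close> n_eq_poly r_pos by linarith
  have "v * y = t + (3 * s + 6 * r + 2) * n"
    unfolding y u_def v_eq s n_eq_poly by (simp add: algebra_simps)
  then have "(v * y) mod n = t"
    using \<open>t < n\<close> by (metis mod_mult_self1 mod_less)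
  then show ?thesis
    using compl_mem_image_T[OF odd_m n_eq _ \<open>y < n\<close>] s wy y by simp
qed

lemma interval_subset_image_T: "{n - (4 * r + 2) .. n - 1} \<subseteq> (\<lambda>i. (v * i) mod n) ` T 2 3 m"
proof
  fix x
  assume "x \<in> {n - (4 * r + 2) .. n - 1}"
  then obtain t where x: "x = n - t" and "1 \<le> t" "t \<le> 4 * r + 2"
    using n_eq_poly by (intro that[of "n - x"]) auto
  moreover have "t < 4 * r + 1" if "odd t" "t \<noteq> 4 * r + 1"
    using that \<open>t \<le> 4 * r + 2\<close> by presburger
  ultimately consider "even t" | "t = 4 * r + 1" | "odd t" "t < 4 * r + 1"
    by blast
  then show "x \<in> (\<lambda>i. (v * i) mod n) ` T 2 3 m"
    unfolding x
    by cases (use mem_image_T_even mem_image_T_middle mem_image_T_odd \<open>1 \<le> t\<close> \<open>t \<le> 4 * r + 2\<close> in auto)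
qed

end

theorem lemma7:
  fixes m n v \<delta> :: nat
  assumes "m mod 4 = 1" and "m > 1"
    and "n = 3 ^ m - 1"
    and "v = (3 ^ ((m + 1) div 2) - 1) div 2"
    and "\<delta> = (3 ^ ((m - 1) div 2) + 5) div 2"
  shows "gcd v n = 1 \<and>
         {n - (\<delta> - 1) .. n - 1} \<subseteq> (\<lambda>i. (v * i) mod n) ` T 2 3 m"
proof -
  define k where "k = m div 4"
  define r :: nat where "r = 3 ^ (2 * k) div 8"
  have m: "m = 4 * k + 1"
    using assms(1) div_mult_mod_eq[of m 4] unfolding k_def by linarith
  have pow: "3 ^ (2 * k) = 8 * r + 1"
    using three_pow_mult_2_mod_8[of k] div_mult_mod_eq[of "3 ^ (2 * k)" "8::nat"] unfolding r_def by linarith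
  have "(3::nat) ^ 2 \<le> 3 ^ (2 * k)"
    using m \<open>m > 1\<close> by (intro power_increasing) auto
  then have "1 \<le> r"
    using pow by simp
  have v: "v = 12 * r + 1" and \<delta>: "\<delta> - 1 = 4 * r + 2"
    using pow unfolding assms(4,5) m by simp_all
  show ?thesis
    using gcd_v_n[OF m pow \<open>1 \<le> r\<close> assms(3) v]
      interval_subset_image_T[OF m pow \<open>1 \<le> r\<close> assms(3) v] \<delta>
    by simp
qed

end
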